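(* Let $n\ge2$. The word $K_n$ has exactly $2\cdot4^{n-2}-1$ letters, and its letter in position $j$ ($1\le j\le 2\cdot 4^{n-2}-1$) is: (a) $P$ exactly when $j=2k-1$, $k=1,\dots,4^{n-2}$; (b) $T$ exactly when $j=4^{2l-1}(2k-1)$ with $l=1,\dots,\lfloor\frac{n-1}{2}\rfloor$, $k=1,\dots,4^{\,n-2l-1}$; (c) $V$ exactly when $j=4^{2l}(2k-1)$ with $l=1,\dots,\lfloor\frac{n-2}{2}\rfloor$, $k=1,\dots,4^{\,n-2l-2}$; (d) $S$ exactly when $j=4^{2l-2}(8k-6)$ with $l=1,\dots,\lfloor\frac{n-1}{2}\rfloor$, $k=1,\dots,4^{\,n-2l-1}$, or $j=4^{2l-1}(8k-2)$ with $l=1,\dots,\lfloor\frac{n-2}{2}\rfloor$, $k=1,\dots,4^{\,n-2l-2}$; (e) $U$ exactly when $j=4^{2l-2}(8k-2)$ with $l=1,\dots,\lfloor\frac{n-1}{2}\rfloor$, $k=1,\dots,4^{\,n-2l-1}$, or $j=4^{2l-1}(8k-6)$ with $l=1,\dots,\lfloor\frac{n-2}{2}\rfloor$, $k=1,\dots,4^{\,n-2l-2}$. Moreover, if $n=2m$ then $K_n$ contains $4^{2m-2}$ letters $P$, $\frac{4^{2m-2}-1}{15}$ letters $V$, $\frac{4^{2m-1}-4}{15}$ letters $T$, $\frac{4^{2m-2}-1}{3}$ letters $S$ and $\frac{4^{2m-2}-1}{3}$ letters $U$; if $n=2m+1$ then it contains $4^{2m-1}$ letters $P$, $\frac{4^{2m-1}-4}{15}$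 letters $V$, $\frac{4^{2m}-1}{15}$ letters $T$, $\frac{4^{2m-1}-1}{3}$ letters $S$ and $\frac{4^{2m-1}-1}{3}$ letters $U$.
   Context: Words $K_n$ ($n\ge2$) over the alphabet $\{P,S,T,U,V\}$ are defined by $K_2=P$; $K_{2m+1}=K_{2m}\,S\,K_{2m}\,T\,K_{2m}\,U\,K_{2m}$ for $m\ge1$; $K_{2m}=K_{2m-1}\,U\,K_{2m-1}\,V\,K_{2m-1}\,S\,K_{2m-1}$ for $m\ge2$ (juxtaposition is concatenation; e.g. $K_3=PSPTPUP$). (In the paper these letters encode blocks of affine curvatures of the Hilbert curve: $P=(-2,1,\tfrac12,-1,1,-1,2,1,-\tfrac12)$, $S=(2,1,-\tfrac12,1)$, $T=(3,1,\tfrac13)$, $U=(1,-2,1,\tfrac12)$, $V=(1,-1,1,-1,1)$, and the curvature sequence of the Hilbert curve at step $n$ is $1,K_n,1$.) $\lfloor x\rfloor$ denotes the greatest integer $\le x$. *)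

theory Defs
  imports Complex_Main
begin

datatype letter = P | S | T | U | V

text \<open>Kw i is the word K_(i+2): Kw 0 = K_2 = P; K_(2m+1) is built from K_(2m)
  using S,T,U (index i = 2m-2 even), K_(2m) from K_(2m-1) using U,V,S (i odd).\<close>
primrec Kw :: "nat \<Rightarrow> letter list" where
  "Kw 0 = [P]"
| "Kw (Suc i) = (let w = Kw i in
     if even i then w @ S # w @ T # w @ U # w
     else w @ U # w @ V # w @ S # w)"

definition K :: "nat \<Rightarrow> letter list" where
  "K n = Kw (n - 2)"

end

theory Submission
  imports Defs
begin

text \<open>All words K n are prefixes of one infinite word whose j-th letter depends only on the
  4-adic shape of j: writing j = 4^a r with 4 not dividing r, the letter is P when a = 0 and r
  is odd, T or V (according to the parity of a) when a > 0 and r is odd, and S or U (according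
  to the parity of a and to r mod 8) when r is twice an odd number. This description is
  invariant under adding multiples of 2 4^i to positions below 2 4^i, so it reproduces the
  recursion, in which K (i + 3) is four copies of K (i + 2) glued by the letters sitting at
  positions 2 4^i, 4 4^i and 6 4^i. The position formulas of the theorem parametrise these
  shapes, and the letter counts follow from the recursion alone.\<close>

fun lift4 :: "letter \<Rightarrow> letter" where
  "lift4 P = T"
| "lift4 T = V"
| "lift4 V = T"
| "lift4 S = U"
| "lift4 U = S"

text \<open>The j-th letter (counting from 1) of the infinite word; the value at 0 is junk.\<close>

fun letter_at :: "nat \<Rightarrow> letter" where
  "letter_at j =
     (if j = 0 \<or> odd j then P
      else if j mod 4 = 2 then (if j mod 8 = 2 then S else U)
      else lift4 (letter_at (j div 4)))"

declare letter_at.simps[simp del]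

lemma letter_at_0: "letter_at 0 = P"
  by (simp add: letter_at.simps)

lemma letter_at_odd: "odd j \<Longrightarrow> letter_at j = P"
  by (simp add: letter_at.simps)

lemma letter_at_mult_4: "0 < j \<Longrightarrow> letter_at (4 * j) = lift4 (letter_at j)"
  by (subst letter_at.simps) simp

lemma letter_at_pow4_Suc_mult:
  assumes "0 < r"
  shows "letter_at (4 ^ Suc a * r) = lift4 (letter_at (4 ^ a * r))"
  using letter_at_mult_4[of "4 ^ a * r"] assms by (simp add: mult.assoc)

lemma letter_at_pow4_mult_odd:
  assumes "odd r"
  shows "letter_at (4 ^ a * r) = (if a = 0 then P else if odd a then T else V)"
proof (induction a)
  case 0 then show ?case using assms by (simp add: letter_at_odd)
next
  case (Suc a)
  then show ?case using letter_at_pow4_Suc_mult[of r a] assms by (simp add: odd_pos)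
qed

lemma letter_at_pow4_mult_even:
  assumes "r mod 8 = 2 \<or> r mod 8 = 6"
  shows "letter_at (4 ^ a * r) = (if (r mod 8 = 2) = even a then S else U)"
proof (induction a)
  case 0
  have "r mod 4 = 2" "even r" "r \<noteq> 0" using assms by presburger+
  then show ?case by (simp add: letter_at.simps)
next
  case (Suc a)
  have "0 < r" using assms by (intro gr0I) auto
  with Suc show ?case using letter_at_pow4_Suc_mult[of r a] by auto
qed

lemma pow4_mult_decomp:
  assumes "0 < (j::nat)"
  obtains a r where "j = 4 ^ a * r" "odd r \<or> r mod 8 = 2 \<or> r mod 8 = 6"
  using assms
proof (induction j arbitrary: thesis rule: less_induct)
  case (less j)
  show ?case
  proof (cases "j mod 4 = 0")
    case True
    then have j: "j = 4 * (j div 4)" and "0 < j div 4" "j div 4 < j" using less.prems(2) by auto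
    then obtain a r where "j div 4 = 4 ^ a * r" "odd r \<or> r mod 8 = 2 \<or> r mod 8 = 6"
      using less.IH by blast
    then show ?thesis using less.prems(1)[of "Suc a" r] j by simp
  next
    case False
    then have "odd j \<or> j mod 8 = 2 \<or> j mod 8 = 6" by presburger
    then show ?thesis using less.prems(1)[of 0 j] by simp
  qed
qed

lemma mod_8_8k_minus:
  fixes k :: nat
  assumes "1 \<le> k"
  shows "(8 * k - 6) mod 8 = 2" and "(8 * k - 2) mod 8 = 6"
proof -
  have "8 * k - 6 = 8 * (k - 1) + 2" "8 * k - 2 = 8 * (k - 1) + 6" using assms by simp_all
  then show "(8 * k - 6) mod 8 = 2" "(8 * k - 2) mod 8 = 6" by (simp_all only: mod_mult_self4) simp_all
qed

lemma letter_at_positions: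
  fixes j l k :: nat
  assumes "1 \<le> l" "1 \<le> k"
  shows "j = 4 ^ (2 * l - 1) * (2 * k - 1) \<Longrightarrow> letter_at j = T"
    and "j = 4 ^ (2 * l) * (2 * k - 1) \<Longrightarrow> letter_at j = V"
    and "j = 4 ^ (2 * l - 2) * (8 * k - 6) \<Longrightarrow> letter_at j = S"
    and "j = 4 ^ (2 * l - 1) * (8 * k - 2) \<Longrightarrow> letter_at j = S"
    and "j = 4 ^ (2 * l - 2) * (8 * k - 2) \<Longrightarrow> letter_at j = U"
    and "j = 4 ^ (2 * l - 1) * (8 * k - 6) \<Longrightarrow> letter_at j = U"
  using assms mod_8_8k_minus[OF assms(2)]
  by (simp_all add: letter_at_pow4_mult_odd letter_at_pow4_mult_even)

lemma letter_at_cases: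
  fixes j :: nat
  assumes "0 < j"
  obtains (P) "odd j" "letter_at j = P"
    | (T) l k where "1 \<le> l" "1 \<le> k" "j = 4 ^ (2 * l - 1) * (2 * k - 1)" "letter_at j = T"
    | (V) l k where "1 \<le> l" "1 \<le> k" "j = 4 ^ (2 * l) * (2 * k - 1)" "letter_at j = V"
    | (S1) l k where "1 \<le> l" "1 \<le> k" "j = 4 ^ (2 * l - 2) * (8 * k - 6)" "letter_at j = S"
    | (S2) l k where "1 \<le> l" "1 \<le> k" "j = 4 ^ (2 * l - 1) * (8 * k - 2)" "letter_at j = S"
    | (U1) l k where "1 \<le> l" "1 \<le> k" "j = 4 ^ (2 * l - 2) * (8 * k - 2)" "letter_at j = U"
    | (U2) l k where "1 \<le> l" "1 \<le> k" "j = 4 ^ (2 * l - 1) * (8 * k - 6)" "letter_at j = U"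
proof -
  obtain a r where j: "j = 4 ^ a * r" and "odd r \<or> r mod 8 = 2 \<or> r mod 8 = 6"
    using assms by (rule pow4_mult_decomp)
  then have "r = 2 * (r div 2) + 1 \<or> r = 8 * (r div 8) + 2 \<or> r = 8 * (r div 8) + 6"
    by presburger
  then obtain q where r: "r = 2 * q + 1 \<or> r = 8 * q + 2 \<or> r = 8 * q + 6" by blast
  have "a = 2 * (a div 2) \<or> a = 2 * (a div 2) + 1" by presburger
  then obtain t where a: "a = 2 * t \<or> a = 2 * t + 1" by blast
  from a r show ?thesis
  proof (elim disjE)
    assume "a = 2 * t" "r = 2 * q + 1"
    then show ?thesis
    proof (cases t)
      case 0
      with j \<open>a = 2 * t\<close> \<open>r = 2 * q + 1\<close> show ?thesis by (intro P letter_at_odd) simp_all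
    next
      case (Suc t')
      with j \<open>a = 2 * t\<close> \<open>r = 2 * q + 1\<close> have "j = 4 ^ (2 * t) * (2 * (q + 1) - 1)" by simp
      with Suc show ?thesis by (intro V[of t "q + 1"] letter_at_positions(2)[of t "q + 1"]) simp_all
    qed
  next
    assume "a = 2 * t + 1" "r = 2 * q + 1"
    with j have "j = 4 ^ (2 * (t + 1) - 1) * (2 * (q + 1) - 1)" by simp
    then show ?thesis by (intro T[of "t + 1" "q + 1"] letter_at_positions(1)[of "t + 1" "q + 1"]) simp_all
  next
    assume "a = 2 * t" "r = 8 * q + 2"
    with j have "j = 4 ^ (2 * (t + 1) - 2) * (8 * (q + 1) - 6)" by simp
    then show ?thesis by (intro S1[of "t + 1" "q + 1"] letter_at_positions(3)[of "t + 1" "q + 1"]) simp_all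
  next
    assume "a = 2 * t + 1" "r = 8 * q + 2"
    with j have "j = 4 ^ (2 * (t + 1) - 1) * (8 * (q + 1) - 6)" by simp
    then show ?thesis by (intro U2[of "t + 1" "q + 1"] letter_at_positions(6)[of "t + 1" "q + 1"]) simp_all
  next
    assume "a = 2 * t" "r = 8 * q + 6"
    with j have "j = 4 ^ (2 * (t + 1) - 2) * (8 * (q + 1) - 2)" by simp
    then show ?thesis by (intro U1[of "t + 1" "q + 1"] letter_at_positions(5)[of "t + 1" "q + 1"]) simp_all
  next
    assume "a = 2 * t + 1" "r = 8 * q + 6"
    with j have "j = 4 ^ (2 * (t + 1) - 1) * (8 * (q + 1) - 2)" by simp
    then show ?thesis by (intro S2[of "t + 1" "q + 1"] letter_at_positions(4)[of "t + 1" "q + 1"]) simp_all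
  qed
qed

lemma letter_at_eq_P_iff: "letter_at j = P \<longleftrightarrow> j = 0 \<or> odd j"
proof
  assume P: "letter_at j = P"
  show "j = 0 \<or> odd j"
  proof (cases "j = 0")
    case False
    then have "0 < j" by simp
    then show ?thesis using P by (cases rule: letter_at_cases) auto
  qed simp
qed (auto simp: letter_at_0 letter_at_odd)

lemma letter_at_neq_P_pos: "letter_at j \<noteq> P \<Longrightarrow> 0 < j"
  by (auto simp: letter_at_eq_P_iff)

lemma letter_at_eq_T_iff:
  "letter_at j = T \<longleftrightarrow> (\<exists>l k. 1 \<le> l \<and> 1 \<le> k \<and> j = 4 ^ (2 * l - 1) * (2 * k - 1))"
  (is "_ \<longleftrightarrow> ?rhs")
proof
  assume "letter_at j = T"
  with letter_at_neq_P_pos[of j] show ?rhs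
    by (cases rule: letter_at_cases[of j]) auto
qed (blast intro: letter_at_positions)

lemma letter_at_eq_V_iff:
  "letter_at j = V \<longleftrightarrow> (\<exists>l k. 1 \<le> l \<and> 1 \<le> k \<and> j = 4 ^ (2 * l) * (2 * k - 1))"
  (is "_ \<longleftrightarrow> ?rhs")
proof
  assume "letter_at j = V"
  with letter_at_neq_P_pos[of j] show ?rhs
    by (cases rule: letter_at_cases[of j]) auto
qed (blast intro: letter_at_positions)

lemma letter_at_eq_S_iff:
  "letter_at j = S \<longleftrightarrow>
     (\<exists>l k. 1 \<le> l \<and> 1 \<le> k \<and> j = 4 ^ (2 * l - 2) * (8 * k - 6))
   \<or> (\<exists>l k. 1 \<le> l \<and> 1 \<le> k \<and> j = 4 ^ (2 * l - 1) * (8 * k - 2))" (is "_ \<longleftrightarrow> ?rhs")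
proof
  assume "letter_at j = S"
  with letter_at_neq_P_pos[of j] show ?rhs
    by (cases rule: letter_at_cases[of j]) auto
qed (blast intro: letter_at_positions)

lemma letter_at_eq_U_iff:
  "letter_at j = U \<longleftrightarrow>
     (\<exists>l k. 1 \<le> l \<and> 1 \<le> k \<and> j = 4 ^ (2 * l - 2) * (8 * k - 2))
   \<or> (\<exists>l k. 1 \<le> l \<and> 1 \<le> k \<and> j = 4 ^ (2 * l - 1) * (8 * k - 6))" (is "_ \<longleftrightarrow> ?rhs")
proof
  assume "letter_at j = U"
  with letter_at_neq_P_pos[of j] show ?rhs
    by (cases rule: letter_at_cases[of j]) auto
qed (blast intro: letter_at_positions)

lemma letter_at_periodic:
  assumes "0 < r" "r < 2 * 4 ^ i"
  shows "letter_at (2 * 4 ^ i * c + r) = letter_at r"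
  using assms
proof (induction i arbitrary: r c)
  case 0
  then have "r = 1" by simp
  then show ?case by (simp add: letter_at_odd)
next
  case (Suc i)
  have m: "2 * 4 ^ Suc i * c = 8 * (4 ^ i * c)" by simp
  consider "odd r" | "r mod 4 = 2" | "r mod 4 = 0" by atomize_elim presburger
  then show ?case
  proof cases
    case 1
    then show ?thesis unfolding m by (simp add: letter_at_odd)
  next
    case 2
    then have "(8 * (4 ^ i * c) + r) mod 8 = r mod 8" "(8 * (4 ^ i * c) + r) mod 4 = 2" "even r" "r \<noteq> 0"
      by presburger+
    with 2 show ?thesis unfolding m by (subst (1 2) letter_at.simps) simp
  next
    case 3
    then have r: "r = 4 * (r div 4)" and q: "0 < r div 4" "r div 4 < 2 * 4 ^ i"
      using Suc.prems by auto
    from q have "letter_at (2 * 4 ^ i * c + r div 4) = letter_at (r div 4)" by (rule Suc.IH)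
    moreover have "2 * 4 ^ Suc i * c + r = 4 * (2 * 4 ^ i * c + r div 4)" using r by simp
    ultimately show ?thesis using r \<open>0 < r div 4\<close> by (metis add_gr_0 letter_at_mult_4)
  qed
qed

lemma map_upt_shift: "map f [m + a..<m + b] = map (\<lambda>x. f (m + x)) [a..<b]"
  by (induction b) (auto simp: not_less_eq_eq)

lemma upt_split_at: "a \<le> b \<Longrightarrow> b < c \<Longrightarrow> [a..<c] = [a..<b] @ b # [Suc b..<c]"
  by (metis upt_add_eq_append le_add_diff_inverse less_imp_le upt_conv_Cons)

lemma Kw_eq_map_letter_at: "Kw i = map letter_at [1..<2 * 4 ^ i]"
proof (induction i)
  case 0
  then show ?case by (simp add: numeral_2_eq_2 letter_at_odd)
next
  case (Suc i)
  define N :: nat where "N = 4 ^ i"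
  have N: "0 < N" unfolding N_def by simp
  have block: "map letter_at [2 * N * c + 1..<2 * N * c + 2 * N] = Kw i" for c
  proof -
    have "map letter_at [2 * N * c + 1..<2 * N * c + 2 * N] = map (\<lambda>r. letter_at (2 * N * c + r)) [1..<2 * N]"
      by (rule map_upt_shift)
    also have "\<dots> = map letter_at [1..<2 * N]"
      unfolding N_def by (rule map_cong) (auto intro: letter_at_periodic)
    finally show ?thesis unfolding Suc N_def .
  qed
  have "letter_at (2 * N) = (if even i then S else U)"
    using letter_at_pow4_mult_even[of 2 i] unfolding N_def by (simp add: mult.commute)
  moreover have "letter_at (4 * N) = (if even i then T else V)"
    using letter_at_pow4_mult_odd[of 1 "Suc i"] unfolding N_def by simp
  moreover have "letter_at (6 * N) = (if even i then U else S)"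
    using letter_at_pow4_mult_even[of 6 i] unfolding N_def by (simp add: mult.commute)
  moreover have "[1..<8 * N] = [1..<2 * N] @ 2 * N # [2 * N * 1 + 1..<2 * N * 1 + 2 * N]
      @ 4 * N # [2 * N * 2 + 1..<2 * N * 2 + 2 * N] @ 6 * N # [2 * N * 3 + 1..<2 * N * 3 + 2 * N]"
    using N upt_split_at[of 1 "2 * N" "8 * N"] upt_split_at[of "Suc (2 * N)" "4 * N" "8 * N"]
      upt_split_at[of "Suc (4 * N)" "6 * N" "8 * N"] by simp
  ultimately show ?case
    using block[of 0] block[of 1] block[of 2] block[of 3] unfolding N_def by (simp add: Let_def)
qed

lemma length_K: "length (K n) = 2 * 4 ^ (n - 2) - 1"
  by (simp add: K_def Kw_eq_map_letter_at)

lemma K_nth: "1 \<le> j \<Longrightarrow> j \<le> 2 * 4 ^ (n - 2) - 1 \<Longrightarrow> K n ! (j - 1) = letter_at j"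
  by (simp add: K_def Kw_eq_map_letter_at nth_map_upt)

lemma count_list_Kw_Suc:
  "count_list (Kw (Suc i)) x = 4 * count_list (Kw i) x
     + (if even i then count_list [S, T, U] x else count_list [U, V, S] x)"
  by (cases x) (simp_all add: Let_def)

lemma count_list_Kw_P: "count_list (Kw i) P = 4 ^ i"
  by (induction i) (simp_all del: Kw.simps(2) add: count_list_Kw_Suc)

lemma count_list_Kw_S: "real (count_list (Kw i) S) = (4 ^ i - 1) / 3"
  by (induction i) (simp_all del: Kw.simps(2) add: count_list_Kw_Suc field_simps)

lemma count_list_Kw_U: "real (count_list (Kw i) U) = (4 ^ i - 1) / 3"
  by (induction i) (simp_all del: Kw.simps(2) add: count_list_Kw_Suc field_simps)

lemma count_list_Kw_T:
  "real (count_list (Kw i) T) = (if even i then 4 ^ Suc i - 4 else 4 ^ Suc i - 1) / 15"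
  by (induction i) (simp_all del: Kw.simps(2) add: count_list_Kw_Suc field_simps)

lemma count_list_Kw_V:
  "real (count_list (Kw i) V) = (if even i then 4 ^ i - 1 else 4 ^ i - 4) / 15"
  by (induction i) (simp_all del: Kw.simps(2) add: count_list_Kw_Suc field_simps)

lemma pow4_mult_less_iff:
  fixes r :: nat
  assumes "0 < r"
  shows "4 ^ a * r < 2 * 4 ^ N \<longleftrightarrow> a \<le> N \<and> r < 2 * 4 ^ (N - a)"
proof (cases "a \<le> N")
  case True
  then have "(4::nat) ^ N = 4 ^ a * 4 ^ (N - a)" by (simp flip: power_add)
  then show ?thesis using True by simp
next
  case False
  then have "(4::nat) ^ Suc N \<le> 4 ^ a" by (intro power_increasing) auto
  also have "\<dots> \<le> 4 ^ a * r" using assms by simp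
  finally show ?thesis using False by simp
qed

lemma pow4_mult_odd_less_iff:
  fixes k a N :: nat
  shows "1 \<le> k \<Longrightarrow> 4 ^ a * (2 * k - 1) < 2 * 4 ^ N \<longleftrightarrow> a \<le> N \<and> k \<le> 4 ^ (N - a)"
  by (subst pow4_mult_less_iff) auto

lemma pow4_mult_8_less_iff:
  fixes k c a N :: nat
  assumes "1 \<le> k" "c = 2 \<or> c = 6"
  shows "4 ^ a * (8 * k - c) < 2 * 4 ^ N \<longleftrightarrow> a < N \<and> k \<le> 4 ^ (N - a - 1)"
proof -
  have "8 * k - c < 2 * 4 ^ M \<longleftrightarrow> 0 < M \<and> k \<le> 4 ^ (M - 1)" for M
  proof (cases M)
    case 0
    then show ?thesis using assms by auto
  next
    case (Suc M')
    have "8 * k - c < 8 * 4 ^ M' \<longleftrightarrow> k \<le> 4 ^ M'" using assms by linarith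
    then show ?thesis using Suc by simp
  qed
  moreover have "0 < 8 * k - c" using assms by linarith
  ultimately show ?thesis by (simp add: pow4_mult_less_iff) (use less_imp_le in blast)
qed

lemma ex_pos_bounded_iff:
  fixes f B :: "nat \<Rightarrow> nat \<Rightarrow> nat"
  assumes "j < J" and "\<And>l k. 1 \<le> l \<Longrightarrow> 1 \<le> k \<Longrightarrow> f l k < J \<longleftrightarrow> l \<le> L \<and> k \<le> B l k"
  shows "(\<exists>l k. 1 \<le> l \<and> 1 \<le> k \<and> j = f l k)
    \<longleftrightarrow> (\<exists>l k. 1 \<le> l \<and> l \<le> L \<and> 1 \<le> k \<and> k \<le> B l k \<and> j = f l k)"
  using assms by blast

lemma ex_T_position_below_iff:
  fixes n j :: nat
  assumes "j < 2 * 4 ^ (n - 2)"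
  shows "(\<exists>l k. 1 \<le> l \<and> 1 \<le> k \<and> j = 4 ^ (2 * l - 1) * (2 * k - 1))
    \<longleftrightarrow> (\<exists>l k. 1 \<le> l \<and> l \<le> (n - 1) div 2 \<and> 1 \<le> k \<and> k \<le> 4 ^ (n - 2 * l - 1)
          \<and> j = 4 ^ (2 * l - 1) * (2 * k - 1))"
proof (rule ex_pos_bounded_iff[OF assms])
  fix l k :: nat
  assume "1 \<le> l" "1 \<le> k"
  moreover have "n - 2 - (2 * l - 1) = n - 2 * l - 1" "2 * l - 1 \<le> n - 2 \<longleftrightarrow> l \<le> (n - 1) div 2"
    using \<open>1 \<le> l\<close> by presburger+
  ultimately show "4 ^ (2 * l - 1) * (2 * k - 1) < 2 * 4 ^ (n - 2) \<longleftrightarrow> l \<le> (n - 1) div 2 \<and> k \<le> 4 ^ (n - 2 * l - 1)"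
    unfolding pow4_mult_odd_less_iff[OF \<open>1 \<le> k\<close>] by simp
qed

lemma ex_V_position_below_iff:
  fixes n j :: nat
  assumes "j < 2 * 4 ^ (n - 2)"
  shows "(\<exists>l k. 1 \<le> l \<and> 1 \<le> k \<and> j = 4 ^ (2 * l) * (2 * k - 1))
    \<longleftrightarrow> (\<exists>l k. 1 \<le> l \<and> l \<le> (n - 2) div 2 \<and> 1 \<le> k \<and> k \<le> 4 ^ (n - 2 * l - 2)
          \<and> j = 4 ^ (2 * l) * (2 * k - 1))"
proof (rule ex_pos_bounded_iff[OF assms])
  fix l k :: nat
  assume "1 \<le> l" "1 \<le> k"
  moreover have "n - 2 - 2 * l = n - 2 * l - 2" "2 * l \<le> n - 2 \<longleftrightarrow> l \<le> (n - 2) div 2"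
    by presburger+
  ultimately show "4 ^ (2 * l) * (2 * k - 1) < 2 * 4 ^ (n - 2) \<longleftrightarrow> l \<le> (n - 2) div 2 \<and> k \<le> 4 ^ (n - 2 * l - 2)"
    unfolding pow4_mult_odd_less_iff[OF \<open>1 \<le> k\<close>] by simp
qed

lemma ex_even_8_position_below_iff:
  fixes n j c :: nat
  assumes "j < 2 * 4 ^ (n - 2)" "c = 2 \<or> c = 6"
  shows "(\<exists>l k. 1 \<le> l \<and> 1 \<le> k \<and> j = 4 ^ (2 * l - 2) * (8 * k - c))
    \<longleftrightarrow> (\<exists>l k. 1 \<le> l \<and> l \<le> (n - 1) div 2 \<and> 1 \<le> k \<and> k \<le> 4 ^ (n - 2 * l - 1)
          \<and> j = 4 ^ (2 * l - 2) * (8 * k - c))"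
proof (rule ex_pos_bounded_iff[OF assms(1)])
  fix l k :: nat
  assume "1 \<le> l" "1 \<le> k"
  moreover have "n - 2 - (2 * l - 2) - 1 = n - 2 * l - 1" "2 * l - 2 < n - 2 \<longleftrightarrow> l \<le> (n - 1) div 2"
    using \<open>1 \<le> l\<close> by presburger+
  ultimately show "4 ^ (2 * l - 2) * (8 * k - c) < 2 * 4 ^ (n - 2) \<longleftrightarrow> l \<le> (n - 1) div 2 \<and> k \<le> 4 ^ (n - 2 * l - 1)"
    unfolding pow4_mult_8_less_iff[OF \<open>1 \<le> k\<close> assms(2)] by simp
qed

lemma ex_odd_8_position_below_iff:
  fixes n j c :: nat
  assumes "j < 2 * 4 ^ (n - 2)" "c = 2 \<or> c = 6"
  shows "(\<exists>l k. 1 \<le> l \<and> 1 \<le> k \<and> j = 4 ^ (2 * l - 1) * (8 * k - c))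
    \<longleftrightarrow> (\<exists>l k. 1 \<le> l \<and> l \<le> (n - 2) div 2 \<and> 1 \<le> k \<and> k \<le> 4 ^ (n - 2 * l - 2)
          \<and> j = 4 ^ (2 * l - 1) * (8 * k - c))"
proof (rule ex_pos_bounded_iff[OF assms(1)])
  fix l k :: nat
  assume "1 \<le> l" "1 \<le> k"
  moreover have "n - 2 - (2 * l - 1) - 1 = n - 2 * l - 2" "2 * l - 1 < n - 2 \<longleftrightarrow> l \<le> (n - 2) div 2"
    using \<open>1 \<le> l\<close> by presburger+
  ultimately show "4 ^ (2 * l - 1) * (8 * k - c) < 2 * 4 ^ (n - 2) \<longleftrightarrow> l \<le> (n - 2) div 2 \<and> k \<le> 4 ^ (n - 2 * l - 2)"
    unfolding pow4_mult_8_less_iff[OF \<open>1 \<le> k\<close> assms(2)] by simp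
qed

lemma less_of_le_2_pow4_minus_1: "j \<le> 2 * 4 ^ N - 1 \<Longrightarrow> j < 2 * (4::nat) ^ N"
  using one_le_power[of "4::nat" N] by linarith

lemma K_nth_eq_P_iff:
  assumes "1 \<le> j" "j \<le> 2 * 4 ^ (n - 2) - 1"
  shows "K n ! (j - 1) = P \<longleftrightarrow> (\<exists>k. 1 \<le> k \<and> k \<le> 4 ^ (n - 2) \<and> j = 2 * k - 1)"
proof -
  have "odd j \<longleftrightarrow> (\<exists>k. 1 \<le> k \<and> k \<le> 4 ^ (n - 2) \<and> j = 2 * k - 1)"
    using less_of_le_2_pow4_minus_1[OF assms(2)] by (auto intro!: exI[of _ "(j + 1) div 2"])
  then show ?thesis using assms(1) unfolding K_nth[OF assms] letter_at_eq_P_iff by simp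
qed

lemma K_nth_eq_T_iff:
  assumes "1 \<le> j" "j \<le> 2 * 4 ^ (n - 2) - 1"
  shows "K n ! (j - 1) = T \<longleftrightarrow> (\<exists>l k. 1 \<le> l \<and> l \<le> (n - 1) div 2 \<and> 1 \<le> k \<and> k \<le> 4 ^ (n - 2 * l - 1)
    \<and> j = 4 ^ (2 * l - 1) * (2 * k - 1))"
  unfolding K_nth[OF assms] letter_at_eq_T_iff
  using ex_T_position_below_iff[OF less_of_le_2_pow4_minus_1[OF assms(2)]] .

lemma K_nth_eq_V_iff:
  assumes "1 \<le> j" "j \<le> 2 * 4 ^ (n - 2) - 1"
  shows "K n ! (j - 1) = V \<longleftrightarrow> (\<exists>l k. 1 \<le> l \<and> l \<le> (n - 2) div 2 \<and> 1 \<le> k \<and> k \<le> 4 ^ (n - 2 * l - 2)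
    \<and> j = 4 ^ (2 * l) * (2 * k - 1))"
  unfolding K_nth[OF assms] letter_at_eq_V_iff
  using ex_V_position_below_iff[OF less_of_le_2_pow4_minus_1[OF assms(2)]] .

lemma K_nth_eq_S_iff:
  assumes "1 \<le> j" "j \<le> 2 * 4 ^ (n - 2) - 1"
  shows "K n ! (j - 1) = S \<longleftrightarrow>
    (\<exists>l k. 1 \<le> l \<and> l \<le> (n - 1) div 2 \<and> 1 \<le> k \<and> k \<le> 4 ^ (n - 2 * l - 1)
      \<and> j = 4 ^ (2 * l - 2) * (8 * k - 6))
  \<or> (\<exists>l k. 1 \<le> l \<and> l \<le> (n - 2) div 2 \<and> 1 \<le> k \<and> k \<le> 4 ^ (n - 2 * l - 2)
      \<and> j = 4 ^ (2 * l - 1) * (8 * k - 2))"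
proof -
  have j: "j < 2 * 4 ^ (n - 2)" using assms(2) by (rule less_of_le_2_pow4_minus_1)
  show ?thesis
    unfolding K_nth[OF assms] letter_at_eq_S_iff ex_even_8_position_below_iff[OF j disjI2[OF refl]]
      ex_odd_8_position_below_iff[OF j disjI1[OF refl]] ..
qed

lemma K_nth_eq_U_iff:
  assumes "1 \<le> j" "j \<le> 2 * 4 ^ (n - 2) - 1"
  shows "K n ! (j - 1) = U \<longleftrightarrow>
    (\<exists>l k. 1 \<le> l \<and> l \<le> (n - 1) div 2 \<and> 1 \<le> k \<and> k \<le> 4 ^ (n - 2 * l - 1)
      \<and> j = 4 ^ (2 * l - 2) * (8 * k - 2))
  \<or> (\<exists>l k. 1 \<le> l \<and> l \<le> (n - 2) div 2 \<and> 1 \<le> k \<and> k \<le> 4 ^ (n - 2 * l - 2)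
      \<and> j = 4 ^ (2 * l - 1) * (8 * k - 6))"
proof -
  have j: "j < 2 * 4 ^ (n - 2)" using assms(2) by (rule less_of_le_2_pow4_minus_1)
  show ?thesis
    unfolding K_nth[OF assms] letter_at_eq_U_iff ex_even_8_position_below_iff[OF j disjI1[OF refl]]
      ex_odd_8_position_below_iff[OF j disjI2[OF refl]] ..
qed

lemma count_list_K_even:
  assumes "n = 2 * m" "2 \<le> n"
  shows "real (count_list (K n) P) = 4 ^ (2 * m - 2)
    \<and> real (count_list (K n) V) = (4 ^ (2 * m - 2) - 1) / 15
    \<and> real (count_list (K n) T) = (4 ^ (2 * m - 1) - 4) / 15
    \<and> real (count_list (K n) S) = (4 ^ (2 * m - 2) - 1) / 3
    \<and> real (count_list (K n) U) = (4 ^ (2 * m - 2) - 1) / 3"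
proof -
  obtain i where "m = Suc i" using assms by (cases m) auto
  with assms have "K n = Kw (2 * i)" "2 * m - 2 = 2 * i" "2 * m - 1 = Suc (2 * i)"
    by (simp_all add: K_def)
  then show ?thesis
    by (simp only: count_list_Kw_P count_list_Kw_V count_list_Kw_T count_list_Kw_S count_list_Kw_U)
      simp
qed

lemma count_list_K_odd:
  assumes "n = 2 * m + 1" "2 \<le> n"
  shows "real (count_list (K n) P) = 4 ^ (2 * m - 1)
    \<and> real (count_list (K n) V) = (4 ^ (2 * m - 1) - 4) / 15
    \<and> real (count_list (K n) T) = (4 ^ (2 * m) - 1) / 15
    \<and> real (count_list (K n) S) = (4 ^ (2 * m - 1) - 1) / 3
    \<and> real (count_list (K n) U) = (4 ^ (2 * m - 1) - 1) / 3"
proof -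
  obtain i where "m = Suc i" using assms by (cases m) auto
  with assms have "K n = Kw (2 * i + 1)" "2 * m - 1 = 2 * i + 1" "2 * m = Suc (2 * i + 1)"
    by (simp_all add: K_def)
  then show ?thesis
    by (simp only: count_list_Kw_P count_list_Kw_V count_list_Kw_T count_list_Kw_S count_list_Kw_U)
      simp
qed

theorem mainTheorem12:
  fixes n :: nat
  assumes "n \<ge> 2"
  shows "length (K n) = 2 * 4 ^ (n - 2) - 1
    \<and> (\<forall>j. 1 \<le> j \<and> j \<le> 2 * 4 ^ (n - 2) - 1 \<longrightarrow>
        (K n ! (j - 1) = P \<longleftrightarrow> (\<exists>k. 1 \<le> k \<and> k \<le> 4 ^ (n - 2) \<and> j = 2 * k - 1))
      \<and> (K n ! (j - 1) = T \<longleftrightarrow> (\<exists>l k. 1 \<le> l \<and> l \<le> (n - 1) div 2 \<and> 1 \<le> k \<and> k \<le> 4 ^ (n - 2 * l - 1)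
             \<and> j = 4 ^ (2 * l - 1) * (2 * k - 1)))
      \<and> (K n ! (j - 1) = V \<longleftrightarrow> (\<exists>l k. 1 \<le> l \<and> l \<le> (n - 2) div 2 \<and> 1 \<le> k \<and> k \<le> 4 ^ (n - 2 * l - 2)
             \<and> j = 4 ^ (2 * l) * (2 * k - 1)))
      \<and> (K n ! (j - 1) = S \<longleftrightarrow>
             (\<exists>l k. 1 \<le> l \<and> l \<le> (n - 1) div 2 \<and> 1 \<le> k \<and> k \<le> 4 ^ (n - 2 * l - 1)
                \<and> j = 4 ^ (2 * l - 2) * (8 * k - 6))
           \<or> (\<exists>l k. 1 \<le> l \<and> l \<le> (n - 2) div 2 \<and> 1 \<le> k \<and> k \<le> 4 ^ (n - 2 * l - 2)
                \<and> j = 4 ^ (2 * l - 1) * (8 * k - 2)))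
      \<and> (K n ! (j - 1) = U \<longleftrightarrow>
             (\<exists>l k. 1 \<le> l \<and> l \<le> (n - 1) div 2 \<and> 1 \<le> k \<and> k \<le> 4 ^ (n - 2 * l - 1)
                \<and> j = 4 ^ (2 * l - 2) * (8 * k - 2))
           \<or> (\<exists>l k. 1 \<le> l \<and> l \<le> (n - 2) div 2 \<and> 1 \<le> k \<and> k \<le> 4 ^ (n - 2 * l - 2)
                \<and> j = 4 ^ (2 * l - 1) * (8 * k - 6))))
    \<and> (\<forall>m::nat. n = 2 * m \<longrightarrow>
        real (count_list (K n) P) = 4 ^ (2 * m - 2)
      \<and> real (count_list (K n) V) = (4 ^ (2 * m - 2) - 1) / 15
      \<and> real (count_list (K n) T) = (4 ^ (2 * m - 1) - 4) / 15
      \<and> real (count_list (K n) S) = (4 ^ (2 * m - 2) - 1) / 3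
      \<and> real (count_list (K n) U) = (4 ^ (2 * m - 2) - 1) / 3)
    \<and> (\<forall>m::nat. n = 2 * m + 1 \<longrightarrow>
        real (count_list (K n) P) = 4 ^ (2 * m - 1)
      \<and> real (count_list (K n) V) = (4 ^ (2 * m - 1) - 4) / 15
      \<and> real (count_list (K n) T) = (4 ^ (2 * m) - 1) / 15
      \<and> real (count_list (K n) S) = (4 ^ (2 * m - 1) - 1) / 3
      \<and> real (count_list (K n) U) = (4 ^ (2 * m - 1) - 1) / 3)"
  using assms count_list_K_even count_list_K_odd
  by (intro conjI allI impI)
    (simp_all only: length_K K_nth_eq_P_iff K_nth_eq_T_iff K_nth_eq_V_iff K_nth_eq_S_iff K_nth_eq_U_iff)

end
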